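(* Let $m\ge 2$ and $\alpha\in[0,1]$. There exists a deterministic voting rule $f$ such that every election $\mathcal E=(N,A,\vec\sigma)$ with $m$ alternatives, in which every agent $i$ has an intensity rank $\ell_i\in[m-1]$, satisfies $$\mathsf{dist}_\alpha(f(\vec\sigma),\mathcal E)\le 2+\max(\alpha,t_{\ell_{\max}}),\qquad\text{where } \ell_{\max}=\max_{i\in N}\ell_i.$$
   Context: An election $\mathcal E=(N,A,\vec\sigma)$ has $n$ agents $N$, $m$ alternatives $A$, and $\sigma_i=(\pi_i,\Join_i)$, where $\pi_i:[m]\to A$ is a bijection ($\pi_i(1)$ most preferred) and $\Join_i:[m-1]\to\{\succ,\succ\!\!\succ\}$. A metric $d$ on $N\cup A$ is nonnegative and symmetric, satisfies the triangle inequality, and has $d(x,x)=0$. The profile $\vec\sigma$ is $\alpha$-consistent with $d$ (mandatory elicitation) if for all $i$ and $j\in[m-1]$: - $\Join_i(j)=\,\succ$ implies $d(i,\pi_i(j+1))\ge d(i,\pi_i(j))>\alpha d(i,\pi_i(j+1))$; - $\Join_i(j)=\,\succ\!\!\succ$ implies $d(i,\pi_i(j))\le\alpha d(i,\pi_i(j+1))$. $\mathsf{dist}_\alpha(a,\mathcal E)=\sup_d \sum_i d(i,a)/\min_b\sum_i d(i,b)$, with the supremum over $\alpha$-consistent $d$. A preference $(\pi,\Join)$ is moderate-up-to-$k$ if $\Join(k+1)=\,\succ\!\!\succ$ and $\Join(i)=\,\succ$ for all $i\in[k]$; it is moderate-up-to-$(m-1)$ if $\Join$ contains no $\succ\!\!\succ$.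 The intensity rank $\ell_i$ of agent $i$ is the $k$ for which $\sigma_i$ is moderate-up-to-$k$. Define - $w_1=\frac{\alpha+1}{3\alpha+1}$ and $t_1=\frac{1-\alpha}{3\alpha+1}$; - for $k>1$: $w_k=1-\frac{2\alpha}{(1-\alpha)t_{k-1}+2w_{k-1}+2\alpha}$ and $t_k=w_k+(1-w_k)t_{k-1}$. *)

theory Defs
  imports Complex_Main "HOL-Library.Extended_Real"
begin

text \<open>A preference (pi, J): pi :: nat => 'a is the ranking on positions 1..m
  (pi 1 most preferred), J :: nat => bool gives the separators on positions 1..m-1,
  where J j = True means strong (succ succ) and J j = False means weak (succ).\<close>

type_synonym 'a pref = "(nat \<Rightarrow> 'a) \<times> (nat \<Rightarrow> bool)"

definition valid_profile :: "nat \<Rightarrow> 'n set \<Rightarrow> 'a set \<Rightarrow> ('n \<Rightarrow> 'a pref) \<Rightarrow> bool" where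
  "valid_profile m N A \<sigma> \<longleftrightarrow> finite N \<and> N \<noteq> {} \<and> finite A \<and> card A = m \<and>
     (\<forall>i\<in>N. bij_betw (fst (\<sigma> i)) {1..m} A)"

definition is_metric_on :: "('x \<Rightarrow> 'x \<Rightarrow> real) \<Rightarrow> 'x set \<Rightarrow> bool" where
  "is_metric_on d S \<longleftrightarrow>
     (\<forall>x\<in>S. \<forall>y\<in>S. d x y \<ge> 0) \<and>
     (\<forall>x\<in>S. \<forall>y\<in>S. d x y = d y x) \<and>
     (\<forall>x\<in>S. d x x = 0) \<and>
     (\<forall>x\<in>S. \<forall>y\<in>S. \<forall>z\<in>S. d x z \<le> d x y + d y z)"

definition alpha_consistent ::
  "real \<Rightarrow> nat \<Rightarrow> 'n set \<Rightarrow> 'a set \<Rightarrow> ('n \<Rightarrow> 'a pref) \<Rightarrow> ('n + 'a \<Rightarrow> 'n + 'a \<Rightarrow> real) \<Rightarrow> bool" where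
  "alpha_consistent \<alpha> m N A \<sigma> d \<longleftrightarrow>
     is_metric_on d (Inl ` N \<union> Inr ` A) \<and>
     (\<forall>i\<in>N. \<forall>j\<in>{1..m-1}.
        let \<pi> = fst (\<sigma> i); J = snd (\<sigma> i) in
        (\<not> J j \<longrightarrow> d (Inl i) (Inr (\<pi> (j+1))) \<ge> d (Inl i) (Inr (\<pi> j)) \<and>
                    d (Inl i) (Inr (\<pi> j)) > \<alpha> * d (Inl i) (Inr (\<pi> (j+1)))) \<and>
        (J j \<longrightarrow> d (Inl i) (Inr (\<pi> j)) \<le> \<alpha> * d (Inl i) (Inr (\<pi> (j+1)))))"

definition social_cost :: "'n set \<Rightarrow> ('n + 'a \<Rightarrow> 'n + 'a \<Rightarrow> real) \<Rightarrow> 'a \<Rightarrow> real" where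
  "social_cost N d a = (\<Sum>i\<in>N. d (Inl i) (Inr a))"

definition distortion ::
  "real \<Rightarrow> nat \<Rightarrow> 'n set \<Rightarrow> 'a set \<Rightarrow> ('n \<Rightarrow> 'a pref) \<Rightarrow> 'a \<Rightarrow> ereal" where
  "distortion \<alpha> m N A \<sigma> a =
     (SUP d \<in> {d. alpha_consistent \<alpha> m N A \<sigma> d}.
        ereal (social_cost N d a / (MIN b\<in>A. social_cost N d b)))"

definition moderate_up_to :: "nat \<Rightarrow> (nat \<Rightarrow> bool) \<Rightarrow> nat \<Rightarrow> bool" where
  "moderate_up_to m J k \<longleftrightarrow>
     (if k = m - 1 then (\<forall>j\<in>{1..m-1}. \<not> J j)
      else J (k+1) \<and> (\<forall>j\<in>{1..k}. \<not> J j))"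

definition intensity_rank :: "nat \<Rightarrow> (nat \<Rightarrow> bool) \<Rightarrow> nat" where
  "intensity_rank m J = (THE k. k \<in> {1..m-1} \<and> moderate_up_to m J k)"

text \<open>wt alpha k = (w_(k+1), t_(k+1)).\<close>
primrec wt :: "real \<Rightarrow> nat \<Rightarrow> real \<times> real" where
  "wt \<alpha> 0 = ((\<alpha>+1)/(3*\<alpha>+1), (1-\<alpha>)/(3*\<alpha>+1))"
| "wt \<alpha> (Suc k) =
     (let w = fst (wt \<alpha> k); t = snd (wt \<alpha> k);
          w' = 1 - 2*\<alpha> / ((1-\<alpha>)*t + 2*w + 2*\<alpha>)
      in (w', w' + (1 - w') * t))"

definition w_seq :: "real \<Rightarrow> nat \<Rightarrow> real" where
  "w_seq \<alpha> k = fst (wt \<alpha> (k - 1))"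

definition t_seq :: "real \<Rightarrow> nat \<Rightarrow> real" where
  "t_seq \<alpha> k = snd (wt \<alpha> (k - 1))"

end

theory Submission
  imports Defs
begin

text \<open>
  An agent of intensity rank \<open>k\<close> spreads one unit of weight over its top \<open>k + 1\<close> alternatives:
  \<open>w\<^sub>k\<close> on its favourite, and \<open>1 - w\<^sub>k\<close> times the weights of a rank \<open>k - 1\<close> agent on the
  others. A fractional veto process, in which each agent in turn removes one unit of score from
  the alternatives it likes least, leaves an alternative \<open>a\<close> together with a fractional
  matching of the agents to the alternatives that exhausts all scores and matches every agent
  only to alternatives it ranks no higher than \<open>a\<close>. For any alternative \<open>b\<close>, the triangle
  inequality \<open>d(i,a) \<le> d(i,c) \<le> d(i,b) + d(b,c)\<close> then gives
  \<open>SC(a) \<le> SC(b) + \<Sum>\<^sub>c score(c) d(b,c)\<close>, and agent \<open>i\<close> contributes at most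
  \<open>(1 + max \<alpha> t\<^sub>k) d(i,b)\<close> to the last sum: by induction on \<open>k\<close> when \<open>b\<close> is among its top
  \<open>k + 1\<close> alternatives, whose distances to \<open>i\<close> grow by factors below \<open>1/\<alpha>\<close>, which is what
  the recursion for \<open>(w\<^sub>k, t\<^sub>k)\<close> is tuned to; and because the strong separator puts all
  weighted alternatives within \<open>\<alpha> d(i,b)\<close> of \<open>i\<close> otherwise.
\<close>

section \<open>Weight sequences\<close>

text \<open>\<open>wt_ext \<alpha> (Suc k) = wt \<alpha> k\<close>: prepending \<open>w\<^sub>0 = 1, t\<^sub>0 = -1\<close> lets the recursion produce
  \<open>w\<^sub>1, t\<^sub>1\<close> as well.\<close>

fun wt_ext :: "real \<Rightarrow> nat \<Rightarrow> real \<times> real" where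
  "wt_ext \<alpha> 0 = (1, -1)"
| "wt_ext \<alpha> (Suc k) =
     (let w = fst (wt_ext \<alpha> k); t = snd (wt_ext \<alpha> k);
          w' = 1 - 2*\<alpha> / ((1-\<alpha>)*t + 2*w + 2*\<alpha>)
      in (w', w' + (1 - w') * t))"

definition w_ext :: "real \<Rightarrow> nat \<Rightarrow> real" where
  "w_ext \<alpha> k = fst (wt_ext \<alpha> k)"

definition t_ext :: "real \<Rightarrow> nat \<Rightarrow> real" where
  "t_ext \<alpha> k = snd (wt_ext \<alpha> k)"

definition wt_denom :: "real \<Rightarrow> nat \<Rightarrow> real" where
  "wt_denom \<alpha> k = (1-\<alpha>) * t_ext \<alpha> k + 2 * w_ext \<alpha> k + 2*\<alpha>"

lemma w_ext_0 [simp]: "w_ext \<alpha> 0 = 1"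
  and t_ext_0 [simp]: "t_ext \<alpha> 0 = -1"
  by (simp_all add: w_ext_def t_ext_def)

lemma w_ext_Suc: "w_ext \<alpha> (Suc k) = 1 - 2*\<alpha> / wt_denom \<alpha> k"
  by (simp add: w_ext_def t_ext_def wt_denom_def Let_def)

lemma t_ext_Suc: "t_ext \<alpha> (Suc k) = w_ext \<alpha> (Suc k) + (1 - w_ext \<alpha> (Suc k)) * t_ext \<alpha> k"
  by (simp add: w_ext_def t_ext_def Let_def)

lemma wt_ext_Suc_eq_wt:
  assumes "0 \<le> \<alpha>"
  shows "wt_ext \<alpha> (Suc k) = wt \<alpha> k"
proof (induction k)
  case 0
  have "1 + 3*\<alpha> \<noteq> 0" using assms by linarith
  then show ?case by (simp add: field_simps)
next
  case (Suc k)
  show ?case by (simp only: wt_ext.simps(2)[of _ "Suc k"] wt.simps Suc.IH)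
qed

lemma t_seq_eq_t_ext: "0 \<le> \<alpha> \<Longrightarrow> 1 \<le> k \<Longrightarrow> t_seq \<alpha> k = t_ext \<alpha> k"
  using wt_ext_Suc_eq_wt[of \<alpha> "k - 1"] by (simp add: t_seq_def t_ext_def)

lemma wt_ext_bounds:
  assumes "0 \<le> \<alpha>" "\<alpha> \<le> 1"
  shows "0 \<le> w_ext \<alpha> k \<and> w_ext \<alpha> k \<le> 1 \<and> t_ext \<alpha> k \<le> 1 \<and> (0 < k \<longrightarrow> 0 \<le> t_ext \<alpha> k)
    \<and> 2*\<alpha> \<le> wt_denom \<alpha> k"
proof (induction k)
  case 0
  then show ?case using assms by (simp add: wt_denom_def)
next
  case (Suc k)
  define u where "u = 2*\<alpha> / wt_denom \<alpha> k"
  have u: "0 \<le> u" "u \<le> 1"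
    using Suc assms by (auto simp: u_def divide_le_eq_1)
  have w: "w_ext \<alpha> (Suc k) = 1 - u" by (simp add: w_ext_Suc u_def)
  have t: "t_ext \<alpha> (Suc k) = 1 - u + u * t_ext \<alpha> k" by (simp add: t_ext_Suc w)
  have "u * t_ext \<alpha> k \<le> u" using Suc u by (simp add: mult_left_le)
  moreover have "0 \<le> t_ext \<alpha> (Suc k)"
  proof (cases k)
    case 0
    \<comment> \<open>here \<open>u = 2\<alpha>/(1+3\<alpha>) \<le> 1/2\<close>, which is where \<open>\<alpha> \<le> 1\<close> enters\<close>
    then have "u * 2 \<le> 1" using assms by (simp add: u_def wt_denom_def field_simps)
    then show ?thesis using 0 t by simp
  next
    case (Suc _)
    then show ?thesis using \<open>0 \<le> u\<close> \<open>u \<le> 1\<close> t Suc.IH by simp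
  qed
  ultimately show ?case using u assms by (simp add: w t wt_denom_def)
qed

lemma
  assumes "0 \<le> \<alpha>" "\<alpha> \<le> 1"
  shows w_ext_nonneg: "0 \<le> w_ext \<alpha> k"
    and w_ext_le_1: "w_ext \<alpha> k \<le> 1"
    and t_ext_le_1: "t_ext \<alpha> k \<le> 1"
    and t_ext_nonneg: "0 < k \<Longrightarrow> 0 \<le> t_ext \<alpha> k"
    and wt_denom_ge: "2*\<alpha> \<le> wt_denom \<alpha> k"
  using wt_ext_bounds[OF assms, of k] by auto

lemma two_w_ext_plus_t_ext_nonneg:
  assumes "0 \<le> \<alpha>" "\<alpha> \<le> 1"
  shows "0 \<le> 2 * w_ext \<alpha> k + t_ext \<alpha> k"
  using w_ext_nonneg[OF assms, of k] t_ext_nonneg[OF assms, of k] by (cases k) auto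

lemma w_ext_Suc_identity:
  assumes "0 \<le> \<alpha>" "\<alpha> \<le> 1"
  shows "(1 - w_ext \<alpha> (Suc k)) * (\<alpha> + 2 * w_ext \<alpha> k + t_ext \<alpha> k) = \<alpha> * (1 + t_ext \<alpha> (Suc k))"
proof (cases "\<alpha> = 0")
  case True
  then show ?thesis by (simp add: w_ext_Suc)
next
  case False
  then have "0 < wt_denom \<alpha> k" using wt_denom_ge[OF assms, of k] assms by linarith
  define u where "u = 2*\<alpha> / wt_denom \<alpha> k"
  have w: "w_ext \<alpha> (Suc k) = 1 - u" by (simp add: w_ext_Suc u_def)
  have "u * wt_denom \<alpha> k = 2*\<alpha>" using \<open>0 < wt_denom \<alpha> k\<close> by (simp add: u_def)
  then show ?thesis unfolding t_ext_Suc w wt_denom_def by (simp add: algebra_simps)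
qed

lemma t_ext_mono:
  assumes "0 \<le> \<alpha>" "\<alpha> \<le> 1" "i \<le> j"
  shows "t_ext \<alpha> i \<le> t_ext \<alpha> j"
proof (rule lift_Suc_mono_le[OF _ assms(3)])
  fix k
  have "0 \<le> w_ext \<alpha> (Suc k) * (1 - t_ext \<alpha> k)"
    using w_ext_nonneg[OF assms(1,2)] t_ext_le_1[OF assms(1,2)] by simp
  then show "t_ext \<alpha> k \<le> t_ext \<alpha> (Suc k)" by (simp add: t_ext_Suc algebra_simps)
qed

section \<open>Positional weights\<close>

fun pos_weight :: "real \<Rightarrow> nat \<Rightarrow> nat \<Rightarrow> real" where
  "pos_weight \<alpha> 0 s = (if s = 1 then 1 else 0)"
| "pos_weight \<alpha> (Suc k) s =
     (if s = 0 then 0 else if s = 1 then w_ext \<alpha> (Suc k)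
      else (1 - w_ext \<alpha> (Suc k)) * pos_weight \<alpha> k (s - 1))"

lemma pos_weight_nonneg: "0 \<le> \<alpha> \<Longrightarrow> \<alpha> \<le> 1 \<Longrightarrow> 0 \<le> pos_weight \<alpha> k s"
  by (induction k arbitrary: s) (simp_all add: w_ext_nonneg w_ext_le_1)

lemma pos_weight_eq_0: "s = 0 \<or> k + 1 < s \<Longrightarrow> pos_weight \<alpha> k s = 0"
  by (induction k arbitrary: s) auto

lemma sum_pos_weight_Suc:
  "(\<Sum>s=1..Suc k + 1. pos_weight \<alpha> (Suc k) s * f s) =
     w_ext \<alpha> (Suc k) * f 1 + (1 - w_ext \<alpha> (Suc k)) * (\<Sum>s=1..k+1. pos_weight \<alpha> k s * f (Suc s))"
proof -
  have "{1..Suc k + 1} = insert 1 {Suc 1..Suc (k+1)}" by auto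
  then have "(\<Sum>s=1..Suc k + 1. pos_weight \<alpha> (Suc k) s * f s) =
      w_ext \<alpha> (Suc k) * f 1 + (\<Sum>s=Suc 1..Suc (k+1). pos_weight \<alpha> (Suc k) s * f s)"
    by simp
  also have "(\<Sum>s=Suc 1..Suc (k+1). pos_weight \<alpha> (Suc k) s * f s) =
      (\<Sum>s=1..k+1. (1 - w_ext \<alpha> (Suc k)) * (pos_weight \<alpha> k s * f (Suc s)))"
    unfolding sum.shift_bounds_cl_Suc_ivl by (intro sum.cong) auto
  also have "\<dots> = (1 - w_ext \<alpha> (Suc k)) * (\<Sum>s=1..k+1. pos_weight \<alpha> k s * f (Suc s))"
    by (rule sum_distrib_left[symmetric])
  finally show ?thesis .
qed

lemma sum_pos_weight: "(\<Sum>s=1..k+1. pos_weight \<alpha> k s) = 1"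
  by (induction k) (use sum_pos_weight_Suc[where f = "\<lambda>_. 1"] in simp_all)

lemma sum_pos_weight_le_first:
  assumes "0 \<le> \<alpha>" "\<alpha> \<le> 1"
    and "\<forall>s\<in>{1..k}. \<alpha> * x (Suc s) \<le> x s" "\<forall>s\<in>{1..k+1}. 0 \<le> x s"
  shows "(\<Sum>s=1..k+1. pos_weight \<alpha> k s * x s) \<le> (2 * w_ext \<alpha> k + t_ext \<alpha> k) * x 1"
  using assms(3,4)
proof (induction k arbitrary: x)
  case 0
  then show ?case by simp
next
  case (Suc k)
  let ?w = "w_ext \<alpha> (Suc k)" and ?c = "2 * w_ext \<alpha> k + t_ext \<alpha> k"
  define S where "S = (\<Sum>s=1..k+1. pos_weight \<alpha> k s * x (Suc s))"
  have "\<forall>s\<in>{1..k}. \<alpha> * x (Suc (Suc s)) \<le> x (Suc s)" "\<forall>s\<in>{1..k+1}. 0 \<le> x (Suc s)"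
    using Suc.prems by auto
  then have IH: "S \<le> ?c * x 2"
    using Suc.IH[of "\<lambda>s. x (Suc s)"] by (simp add: S_def numeral_2_eq_2)
  have "(1 - ?w) * S \<le> (?w + t_ext \<alpha> (Suc k)) * x 1"
  proof (cases "\<alpha> = 0")
    case True
    then show ?thesis using Suc.prems by (simp add: w_ext_Suc t_ext_Suc)
  next
    case False
    have w: "0 \<le> 1 - ?w" "0 \<le> ?c"
      using assms(1,2) by (simp_all add: w_ext_le_1 two_w_ext_plus_t_ext_nonneg)
    have identity: "(1 - ?w) * ?c = \<alpha> * (?w + t_ext \<alpha> (Suc k))"
      using w_ext_Suc_identity[OF assms(1,2), of k]
      by (simp only: ring_distribs mult_1 mult_1_right mult.commute[of _ \<alpha>])
    have "\<alpha> * ((1 - ?w) * S) \<le> (1 - ?w) * (?c * (\<alpha> * x 2))"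
      using IH w assms(1) by (simp add: mult_left_mono mult.left_commute)
    also have "\<dots> \<le> (1 - ?w) * (?c * x 1)"
      using Suc.prems(1) w by (intro mult_left_mono) (auto simp: numeral_2_eq_2)
    also have "\<dots> = \<alpha> * ((?w + t_ext \<alpha> (Suc k)) * x 1)"
      using identity by (metis mult.assoc)
    finally show ?thesis using False assms(1) by simp
  qed
  then show ?case
    unfolding sum_pos_weight_Suc S_def[symmetric] by (simp add: t_ext_Suc algebra_simps)
qed

lemma steps_mono:
  fixes x :: "nat \<Rightarrow> 'a::order"
  assumes "\<And>s. p \<le> s \<Longrightarrow> s < q \<Longrightarrow> x s \<le> x (Suc s)" "p \<le> q"
  shows "x p \<le> x q"
  using assms(2) by (induction rule: dec_induct) (auto intro: order_trans assms(1))

lemma sum_pos_weight_le_triangle: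
  assumes "0 \<le> \<alpha>" "\<alpha> \<le> 1"
    and "\<forall>s\<in>{1..k}. \<alpha> * x (Suc s) \<le> x s \<and> x s \<le> x (Suc s)" "\<forall>s\<in>{1..k+1}. 0 \<le> x s"
    and "r \<in> {1..k+1}" "g r = 0" "\<forall>s\<in>{1..k+1}. g s \<le> x r + x s"
  shows "(\<Sum>s=1..k+1. pos_weight \<alpha> k s * g s) \<le> (1 + t_ext \<alpha> k) * x r"
  using assms(3-)
proof (induction k arbitrary: x g r)
  case 0
  then show ?case by simp
next
  case (Suc k)
  let ?w = "w_ext \<alpha> (Suc k)"
  define G where "G = (\<Sum>s=1..k+1. pos_weight \<alpha> k s * g (Suc s))"
  have w: "0 \<le> ?w" "?w \<le> 1" using assms(1,2) by (simp_all add: w_ext_nonneg w_ext_le_1)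
  have lhs: "(\<Sum>s=1..Suc k+1. pos_weight \<alpha> (Suc k) s * g s) = ?w * g 1 + (1 - ?w) * G"
    by (simp only: sum_pos_weight_Suc G_def)
  show ?case
  proof (cases "r = 1")
    case True
    define S where "S = (\<Sum>s=1..k+1. pos_weight \<alpha> k s * x (Suc s))"
    have "G \<le> (\<Sum>s=1..k+1. pos_weight \<alpha> k s * (x 1 + x (Suc s)))"
      unfolding G_def using Suc.prems(5) True assms(1,2)
      by (intro sum_mono mult_left_mono) (auto simp: pos_weight_nonneg)
    also have "\<dots> = x 1 * (\<Sum>s=1..k+1. pos_weight \<alpha> k s) + S"
      by (simp add: S_def distrib_left sum.distrib sum_distrib_left mult.commute)
    finally have G: "G \<le> x 1 + S" by (simp only: sum_pos_weight mult_1_right)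
    have S: "\<alpha> * S \<le> (2 * w_ext \<alpha> k + t_ext \<alpha> k) * x 1"
    proof -
      have "S \<le> (2 * w_ext \<alpha> k + t_ext \<alpha> k) * x 2"
        using sum_pos_weight_le_first[OF assms(1,2), of k "\<lambda>s. x (Suc s)"] Suc.prems(1,2)
        by (force simp: S_def numeral_2_eq_2)
      then have "\<alpha> * S \<le> (2 * w_ext \<alpha> k + t_ext \<alpha> k) * (\<alpha> * x 2)"
        using assms(1) by (simp add: mult_left_mono mult.left_commute)
      also have "\<dots> \<le> (2 * w_ext \<alpha> k + t_ext \<alpha> k) * x 1"
        using Suc.prems(1) assms(1,2)
        by (intro mult_left_mono) (auto simp: numeral_2_eq_2 two_w_ext_plus_t_ext_nonneg)
      finally show ?thesis .
    qed
    have "(1 - ?w) * G \<le> (1 + t_ext \<alpha> (Suc k)) * x 1"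
    proof (cases "\<alpha> = 0")
      case True
      then show ?thesis using Suc.prems(2) by (simp add: w_ext_Suc t_ext_Suc)
    next
      case False
      have "\<alpha> * ((1 - ?w) * G) \<le> (1 - ?w) * (\<alpha> * x 1 + \<alpha> * S)"
        using G w assms(1) by (simp add: mult_left_mono distrib_left[symmetric] mult.left_commute)
      also have "\<dots> \<le> (1 - ?w) * ((\<alpha> + 2 * w_ext \<alpha> k + t_ext \<alpha> k) * x 1)"
        using S w by (intro mult_left_mono) (auto simp: algebra_simps)
      also have "\<dots> = \<alpha> * ((1 + t_ext \<alpha> (Suc k)) * x 1)"
        by (simp only: mult.assoc[symmetric] w_ext_Suc_identity[OF assms(1,2)])
      finally show ?thesis using False assms(1) by simp
    qed
    then show ?thesis unfolding lhs using True Suc.prems(4) by simp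
  next
    case False
    have "G \<le> (1 + t_ext \<alpha> k) * x r"
      using Suc.IH[of "\<lambda>s. x (Suc s)" "r - 1" "\<lambda>s. g (Suc s)"] False Suc.prems
      by (force simp: G_def)
    moreover have "x 1 \<le> x r"
      by (rule steps_mono) (use Suc.prems(1,3) in auto)
    then have "g 1 \<le> 2 * x r" using Suc.prems(5) by force
    ultimately have "?w * g 1 + (1 - ?w) * G \<le> ?w * (2 * x r) + (1 - ?w) * ((1 + t_ext \<alpha> k) * x r)"
      using w by (intro add_mono mult_left_mono) auto
    then show ?thesis unfolding lhs by (simp add: t_ext_Suc algebra_simps)
  qed
qed

lemma sum_pos_weight_le_max:
  assumes "0 \<le> \<alpha>" "\<alpha> \<le> 1" "k < m"
    and "\<forall>s\<in>{1..k}. \<alpha> * x (Suc s) \<le> x s"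
    and "\<And>s. 1 \<le> s \<Longrightarrow> s < m \<Longrightarrow> x s \<le> x (Suc s)"
    and "\<forall>s\<in>{1..m}. 0 \<le> x s"
    and "Suc k < m \<Longrightarrow> x (Suc k) \<le> \<alpha> * x (Suc (Suc k))"
    and "r \<in> {1..m}" "g r = 0" "\<forall>s\<in>{1..m}. g s \<le> x r + x s"
  shows "(\<Sum>s=1..k+1. pos_weight \<alpha> k s * g s) \<le> (1 + max \<alpha> (t_ext \<alpha> k)) * x r"
proof (cases "r \<le> k + 1")
  case True
  have "(\<Sum>s=1..k+1. pos_weight \<alpha> k s * g s) \<le> (1 + t_ext \<alpha> k) * x r"
    by (rule sum_pos_weight_le_triangle) (use assms True in auto)
  also have "\<dots> \<le> (1 + max \<alpha> (t_ext \<alpha> k)) * x r"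
    using assms(6,8) by (intro mult_right_mono) auto
  finally show ?thesis .
next
  case False
  have "g s \<le> (1 + \<alpha>) * x r" if "s \<in> {1..k+1}" for s
  proof -
    have "x s \<le> x (Suc k)" by (rule steps_mono) (use that assms(3,5) in auto)
    also have "\<dots> \<le> \<alpha> * x (Suc (Suc k))" using False assms(7,8) by auto
    also have "\<dots> \<le> \<alpha> * x r"
    proof (rule mult_left_mono)
      show "x (Suc (Suc k)) \<le> x r" by (rule steps_mono) (use False assms(5,8) in auto)
    qed (fact assms(1))
    finally have "x s \<le> \<alpha> * x r" .
    moreover have "g s \<le> x r + x s" using assms(3,10) that by simp
    ultimately show ?thesis by (simp add: algebra_simps)
  qed
  then have "(\<Sum>s=1..k+1. pos_weight \<alpha> k s * g s) \<le> (\<Sum>s=1..k+1. pos_weight \<alpha> k s * ((1 + \<alpha>) * x r))"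
    using assms(1,2) by (intro sum_mono mult_left_mono) (auto simp: pos_weight_nonneg)
  also have "\<dots> = (1 + \<alpha>) * x r" by (simp only: sum_distrib_right[symmetric] sum_pos_weight mult_1)
  also have "\<dots> \<le> (1 + max \<alpha> (t_ext \<alpha> k)) * x r"
    using assms(6,8) by (intro mult_right_mono) auto
  finally show ?thesis .
qed

section \<open>Fractional veto\<close>

lemma greedy_removal:
  fixes s :: "'a \<Rightarrow> real" and rank :: "'a \<Rightarrow> nat"
  assumes "finite A" "\<forall>c\<in>A. 0 \<le> s c" "0 \<le> M" "M \<le> sum s A"
  shows "\<exists>g. (\<forall>c\<in>A. 0 \<le> g c \<and> g c \<le> s c) \<and> sum g A = M \<and>
    (\<forall>c\<in>A. \<forall>e\<in>A. 0 < g c \<and> g e < s e \<longrightarrow> rank e \<le> rank c)"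
  using assms
proof (induction A arbitrary: M rule: finite_remove_induct)
  case empty
  then show ?case by (intro exI[of _ "\<lambda>_. 0"]) auto
next
  case (remove A)
  have "Max (rank ` A) \<in> rank ` A" using remove.hyps(1,2) by simp
  then obtain z where z: "z \<in> A" "rank z = Max (rank ` A)" by auto
  then have z_worst: "\<forall>e\<in>A. rank e \<le> rank z" using remove.hyps(1) by simp
  have sum_z: "sum f A = f z + sum f (A - {z})" for f :: "'a \<Rightarrow> real"
    using z(1) remove.hyps(1) by (simp add: sum.remove)
  show ?case
  proof (cases "M \<le> s z")
    case True
    define g where "g = (\<lambda>c. if c = z then M else 0::real)"
    have "sum g A = M" using sum_z[of g] by (simp add: g_def)
    then show ?thesis using True remove.prems z_worst by (intro exI[of _ g]) (auto simp: g_def)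
  next
    case False
    obtain g where g: "\<forall>c\<in>A - {z}. 0 \<le> g c \<and> g c \<le> s c" "sum g (A - {z}) = M - s z"
      "\<forall>c\<in>A - {z}. \<forall>e\<in>A - {z}. 0 < g c \<and> g e < s e \<longrightarrow> rank e \<le> rank c"
      using remove.IH[OF z(1), of "M - s z"] remove.prems False sum_z[of s] by auto
    have "sum (g(z := s z)) A = M"
      using sum_z[of "g(z := s z)"] g(2) by (simp add: sum.cong[of _ _ "g(z := s z)" g])
    moreover have "rank e \<le> rank c"
      if "c \<in> A" "e \<in> A" "0 < (g(z := s z)) c" "(g(z := s z)) e < s e" for c e
      using that g(3) z_worst by (cases "c = z"; cases "e = z") auto
    ultimately show ?thesis using g(1) remove.prems(1)
      by (intro exI[of _ "g(z := s z)"]) auto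
  qed
qed

text \<open>\<open>v i c\<close> is the part of the score of \<open>c\<close> vetoed by agent \<open>i\<close>; \<open>rank i\<close> is \<open>i\<close>'s ranking,
  smaller meaning better.\<close>

definition veto_winner ::
  "'n set \<Rightarrow> 'a set \<Rightarrow> ('n \<Rightarrow> 'a \<Rightarrow> nat) \<Rightarrow> ('a \<Rightarrow> real) \<Rightarrow> 'a \<Rightarrow> bool" where
  "veto_winner N A rank s a \<longleftrightarrow> a \<in> A \<and>
     (\<exists>v. (\<forall>i\<in>N. \<forall>c\<in>A. 0 \<le> v i c) \<and> (\<forall>i\<in>N. sum (v i) A = 1) \<and>
          (\<forall>c\<in>A. (\<Sum>i\<in>N. v i c) = s c) \<and>
          (\<forall>i\<in>N. \<forall>c\<in>A. 0 < v i c \<longrightarrow> rank i a \<le> rank i c))"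

lemma veto_winner_exists:
  fixes s :: "'a \<Rightarrow> real" and rank :: "'n \<Rightarrow> 'a \<Rightarrow> nat"
  assumes "finite N" "N \<noteq> {}" "finite A" "\<forall>c\<in>A. 0 \<le> s c" "sum s A = real (card N)"
  shows "\<exists>a. 0 < s a \<and> veto_winner N A rank s a"
  using assms(1,2,4,5)
proof (induction N arbitrary: s rule: finite_ne_induct)
  case (singleton i)
  define P where "P = {c\<in>A. 0 < s c}"
  have "P \<noteq> {}"
  proof
    assume "P = {}"
    then have "sum s A \<le> 0" by (intro sum_nonpos) (auto simp: P_def)
    then show False using singleton.prems(2) by simp
  qed
  then have "Min (rank i ` P) \<in> rank i ` P" using assms(3) by (simp add: P_def)
  then obtain a where a: "a \<in> P" "rank i a = Min (rank i ` P)" by auto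
  then have "\<forall>c\<in>P. rank i a \<le> rank i c" using assms(3) by (simp add: P_def)
  then show ?case using a(1) singleton.prems
    by (intro exI[of _ a]) (auto simp: veto_winner_def P_def intro!: exI[of _ "\<lambda>_. s"])
next
  case (insert i N)
  obtain g where g: "\<forall>c\<in>A. 0 \<le> g c \<and> g c \<le> s c" "sum g A = 1"
      "\<forall>c\<in>A. \<forall>e\<in>A. 0 < g c \<and> g e < s e \<longrightarrow> rank i e \<le> rank i c"
    using greedy_removal[OF assms(3), of s 1 "rank i"] insert.prems insert.hyps(1,3) by auto
  have "\<forall>c\<in>A. 0 \<le> s c - g c" "(\<Sum>c\<in>A. s c - g c) = real (card N)"
    using g(1,2) insert.prems(2) insert.hyps(1,3) by (auto simp: sum_subtractf)
  then obtain a v where a: "0 < s a - g a" "a \<in> A" and v: "\<forall>j\<in>N. \<forall>c\<in>A. 0 \<le> v j c"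
      "\<forall>j\<in>N. sum (v j) A = 1" "\<forall>c\<in>A. (\<Sum>j\<in>N. v j c) = s c - g c"
      "\<forall>j\<in>N. \<forall>c\<in>A. 0 < v j c \<longrightarrow> rank j a \<le> rank j c"
    using insert.IH[of "\<lambda>c. s c - g c"] unfolding veto_winner_def by auto
  \<comment> \<open>agent \<open>i\<close> did not exhaust \<open>a\<close>, so it only removed mass from alternatives it ranks no higher than \<open>a\<close>\<close>
  have "rank i a \<le> rank i c" if "c \<in> A" "0 < g c" for c
    using g(3) a that by auto
  moreover have "(\<Sum>j\<in>insert i N. (v(i := g)) j c) = s c" if "c \<in> A" for c
  proof -
    have "(\<Sum>j\<in>N. (v(i := g)) j c) = (\<Sum>j\<in>N. v j c)"
      using insert.hyps(3) by (intro sum.cong) auto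
    then show ?thesis using v(3) that insert.hyps(1,3) by simp
  qed
  ultimately show ?case using a g(1,2) v(1,2,4) insert.hyps(3)
    by (intro exI[of _ a]) (auto simp: veto_winner_def split: if_splits intro!: exI[of _ "v(i := g)"])
qed

lemma veto_winner_cost_le:
  fixes D :: "'n \<Rightarrow> 'a \<Rightarrow> real" and E :: "'a \<Rightarrow> real"
  assumes "veto_winner N A rank s a"
    and "\<And>i c. i \<in> N \<Longrightarrow> c \<in> A \<Longrightarrow> rank i a \<le> rank i c \<Longrightarrow> D i a \<le> D i c"
    and "\<And>i c. i \<in> N \<Longrightarrow> c \<in> A \<Longrightarrow> D i c \<le> D i b + E c"
  shows "(\<Sum>i\<in>N. D i a) \<le> (\<Sum>i\<in>N. D i b) + (\<Sum>c\<in>A. s c * E c)"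
proof -
  obtain v where v: "\<forall>i\<in>N. \<forall>c\<in>A. 0 \<le> v i c" "\<forall>i\<in>N. sum (v i) A = 1"
      "\<forall>c\<in>A. (\<Sum>i\<in>N. v i c) = s c" "\<forall>i\<in>N. \<forall>c\<in>A. 0 < v i c \<longrightarrow> rank i a \<le> rank i c"
    using assms(1) unfolding veto_winner_def by blast
  have "D i a \<le> D i b + (\<Sum>c\<in>A. v i c * E c)" if i: "i \<in> N" for i
  proof -
    have "D i a = (\<Sum>c\<in>A. v i c * D i a)" using v(2) i by (simp flip: sum_distrib_right)
    also have "\<dots> \<le> (\<Sum>c\<in>A. v i c * (D i b + E c))"
    proof (rule sum_mono)
      fix c assume c: "c \<in> A"
      show "v i c * D i a \<le> v i c * (D i b + E c)"
      proof (cases "v i c = 0")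
        case False
        then have "D i a \<le> D i c" using v(1,4) assms(2) i c by force
        then show ?thesis using assms(3)[OF i c] v(1) i c by (intro mult_left_mono) auto
      qed simp
    qed
    also have "\<dots> = D i b + (\<Sum>c\<in>A. v i c * E c)"
      using v(2) i by (simp add: distrib_left sum.distrib flip: sum_distrib_right)
    finally show ?thesis .
  qed
  then have "(\<Sum>i\<in>N. D i a) \<le> (\<Sum>i\<in>N. D i b) + (\<Sum>i\<in>N. \<Sum>c\<in>A. v i c * E c)"
    by (simp add: sum_mono flip: sum.distrib)
  also have "(\<Sum>i\<in>N. \<Sum>c\<in>A. v i c * E c) = (\<Sum>c\<in>A. (\<Sum>i\<in>N. v i c) * E c)"
    by (simp add: sum.swap[of _ N A] sum_distrib_right)
  also have "\<dots> = (\<Sum>c\<in>A. s c * E c)"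
    using v(3) by simp
  finally show ?thesis .
qed

section \<open>Rankings and consistent metrics\<close>

lemma moderate_up_to_weak: "moderate_up_to m J k \<Longrightarrow> j \<in> {1..k} \<Longrightarrow> \<not> J j"
  by (auto simp: moderate_up_to_def split: if_splits)

lemma moderate_up_to_strong: "moderate_up_to m J k \<Longrightarrow> k \<noteq> m - 1 \<Longrightarrow> J (Suc k)"
  by (simp add: moderate_up_to_def)

lemma moderate_up_to_unique:
  assumes "k \<in> {1..m-1}" "moderate_up_to m J k" "k' \<in> {1..m-1}" "moderate_up_to m J k'"
  shows "k = k'"
proof -
  have False if "moderate_up_to m J a" "moderate_up_to m J b" "a < b" "b \<le> m - 1" "1 \<le> a" for a b
    using moderate_up_to_strong[OF that(1)] moderate_up_to_weak[OF that(2), of "Suc a"] that(3-)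
    by auto
  then show ?thesis using assms by (metis atLeastAtMost_iff linorder_neqE_nat)
qed

lemma intensity_rank_moderate:
  assumes "\<exists>k\<in>{1..m-1}. moderate_up_to m J k"
  shows "intensity_rank m J \<in> {1..m-1}" "moderate_up_to m J (intensity_rank m J)"
proof -
  have "\<exists>!k. k \<in> {1..m-1} \<and> moderate_up_to m J k"
    using assms moderate_up_to_unique by blast
  from theI'[OF this] show "intensity_rank m J \<in> {1..m-1}" "moderate_up_to m J (intensity_rank m J)"
    unfolding intensity_rank_def by simp_all
qed

definition position :: "nat \<Rightarrow> 'a pref \<Rightarrow> 'a \<Rightarrow> nat" where
  "position m p = inv_into {1..m} (fst p)"

lemma position_in_range: "bij_betw (fst p) {1..m} A \<Longrightarrow> c \<in> A \<Longrightarrow> position m p c \<in> {1..m}"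
  by (auto simp: position_def bij_betw_def)

lemma fst_position: "bij_betw (fst p) {1..m} A \<Longrightarrow> c \<in> A \<Longrightarrow> fst p (position m p c) = c"
  by (simp add: position_def bij_betw_inv_into_right)

lemma position_fst:
  "bij_betw (fst p) {1..m} A \<Longrightarrow> s \<in> {1..m} \<Longrightarrow> position m p (fst p s) = s"
  by (simp add: position_def bij_betw_def)

lemma sum_pos_weight_position:
  assumes "bij_betw (fst p) {1..m} A" "k < m"
  shows "(\<Sum>c\<in>A. pos_weight \<alpha> k (position m p c) * h c) = (\<Sum>s=1..k+1. pos_weight \<alpha> k s * h (fst p s))"
proof -
  have "(\<Sum>c\<in>A. pos_weight \<alpha> k (position m p c) * h c) = (\<Sum>s=1..m. pos_weight \<alpha> k s * h (fst p s))"
    using assms(1) by (simp add: sum.reindex_bij_betw[OF assms(1), symmetric] position_fst)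
  also have "\<dots> = (\<Sum>s=1..k+1. pos_weight \<alpha> k s * h (fst p s))"
    by (rule sum.mono_neutral_right) (use assms(2) in \<open>auto simp: pos_weight_eq_0\<close>)
  finally show ?thesis .
qed

lemma alpha_consistent_metric:
  assumes "alpha_consistent \<alpha> m N A \<sigma> d" "i \<in> N" "b \<in> A" "c \<in> A"
  shows "0 \<le> d (Inl i) (Inr c)" "d (Inr c) (Inr c) = 0"
    and "d (Inl i) (Inr c) \<le> d (Inl i) (Inr b) + d (Inr b) (Inr c)"
    and "d (Inr b) (Inr c) \<le> d (Inl i) (Inr b) + d (Inl i) (Inr c)"
proof -
  have met: "is_metric_on d (Inl ` N \<union> Inr ` A)"
    using assms(1) by (simp add: alpha_consistent_def)
  have mem: "Inl i \<in> Inl ` N \<union> Inr ` A" "Inr b \<in> Inl ` N \<union> Inr ` A" "Inr c \<in> Inl ` N \<union> Inr ` A"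
    using assms(2-4) by auto
  show "0 \<le> d (Inl i) (Inr c)" "d (Inr c) (Inr c) = 0"
    and "d (Inl i) (Inr c) \<le> d (Inl i) (Inr b) + d (Inr b) (Inr c)"
    using met mem unfolding is_metric_on_def by blast+
  have "d (Inr b) (Inr c) \<le> d (Inr b) (Inl i) + d (Inl i) (Inr c)"
    using met mem unfolding is_metric_on_def by blast
  moreover have "d (Inr b) (Inl i) = d (Inl i) (Inr b)"
    using met mem unfolding is_metric_on_def by blast
  ultimately show "d (Inr b) (Inr c) \<le> d (Inl i) (Inr b) + d (Inl i) (Inr c)" by simp
qed

lemma alpha_consistent_separator:
  assumes "alpha_consistent \<alpha> m N A \<sigma> d" "i \<in> N" "j \<in> {1..m-1}"
  defines "x \<equiv> \<lambda>s. d (Inl i) (Inr (fst (\<sigma> i) s))"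
  shows "\<not> snd (\<sigma> i) j \<Longrightarrow> x j \<le> x (Suc j) \<and> \<alpha> * x (Suc j) < x j"
    and "snd (\<sigma> i) j \<Longrightarrow> x j \<le> \<alpha> * x (Suc j)"
  using assms by (auto simp: alpha_consistent_def Let_def)

lemma alpha_consistent_ranked_mono:
  assumes "alpha_consistent \<alpha> m N A \<sigma> d" "valid_profile m N A \<sigma>" "\<alpha> \<le> 1" "i \<in> N"
    and "1 \<le> p" "p \<le> q" "q \<le> m"
  shows "d (Inl i) (Inr (fst (\<sigma> i) p)) \<le> d (Inl i) (Inr (fst (\<sigma> i) q))"
proof (rule steps_mono[OF _ \<open>p \<le> q\<close>])
  fix s assume s: "p \<le> s" "s < q"
  have "bij_betw (fst (\<sigma> i)) {1..m} A" using assms(2,4) by (simp add: valid_profile_def)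
  then have "fst (\<sigma> i) (Suc s) \<in> A" using s assms(5,7) by (auto intro: bij_betw_apply)
  then have "0 \<le> d (Inl i) (Inr (fst (\<sigma> i) (Suc s)))"
    using alpha_consistent_metric(1)[OF assms(1,4)] by blast
  then have "\<alpha> * d (Inl i) (Inr (fst (\<sigma> i) (Suc s))) \<le> d (Inl i) (Inr (fst (\<sigma> i) (Suc s)))"
    using mult_right_mono[OF assms(3)] by fastforce
  then show "d (Inl i) (Inr (fst (\<sigma> i) s)) \<le> d (Inl i) (Inr (fst (\<sigma> i) (Suc s)))"
    using alpha_consistent_separator[OF assms(1,4), of s] s assms(5,7)
    by (cases "snd (\<sigma> i) s") force+
qed

lemma alpha_consistent_position_mono:
  assumes "alpha_consistent \<alpha> m N A \<sigma> d" "valid_profile m N A \<sigma>" "\<alpha> \<le> 1" "i \<in> N"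
    and "a \<in> A" "c \<in> A" "position m (\<sigma> i) a \<le> position m (\<sigma> i) c"
  shows "d (Inl i) (Inr a) \<le> d (Inl i) (Inr c)"
proof -
  have bij: "bij_betw (fst (\<sigma> i)) {1..m} A" using assms(2,4) by (simp add: valid_profile_def)
  show ?thesis
    using alpha_consistent_ranked_mono[OF assms(1-4) _ assms(7)]
      position_in_range[OF bij assms(5)] position_in_range[OF bij assms(6)]
    by (simp add: fst_position[OF bij assms(5)] fst_position[OF bij assms(6)])
qed

lemma alpha_consistent_weighted_dist_le:
  assumes "alpha_consistent \<alpha> m N A \<sigma> d" "valid_profile m N A \<sigma>" "0 \<le> \<alpha>" "\<alpha> \<le> 1" "i \<in> N"
    and "k \<in> {1..m-1}" "moderate_up_to m (snd (\<sigma> i)) k" "b \<in> A"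
  shows "(\<Sum>c\<in>A. pos_weight \<alpha> k (position m (\<sigma> i) c) * d (Inr b) (Inr c))
    \<le> (1 + max \<alpha> (t_ext \<alpha> k)) * d (Inl i) (Inr b)"
proof -
  define x where "x = (\<lambda>s. d (Inl i) (Inr (fst (\<sigma> i) s)))"
  define r where "r = position m (\<sigma> i) b"
  have bij: "bij_betw (fst (\<sigma> i)) {1..m} A" using assms(2,5) by (simp add: valid_profile_def)
  have r: "r \<in> {1..m}" "fst (\<sigma> i) r = b"
    using position_in_range[OF bij assms(8)] fst_position[OF bij assms(8)] by (simp_all add: r_def)
  have ranked: "fst (\<sigma> i) s \<in> A" if "s \<in> {1..m}" for s using bij that by (rule bij_betw_apply)
  have k: "k < m" using assms(6) by auto
  have "(\<Sum>c\<in>A. pos_weight \<alpha> k (position m (\<sigma> i) c) * d (Inr b) (Inr c))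
      = (\<Sum>s=1..k+1. pos_weight \<alpha> k s * d (Inr b) (Inr (fst (\<sigma> i) s)))"
    by (rule sum_pos_weight_position[OF bij k])
  also have "\<dots> \<le> (1 + max \<alpha> (t_ext \<alpha> k)) * x r"
  proof (rule sum_pos_weight_le_max[OF assms(3,4) k])
    show "\<forall>s\<in>{1..k}. \<alpha> * x (Suc s) \<le> x s"
      using alpha_consistent_separator(1)[OF assms(1,5)] moderate_up_to_weak[OF assms(7)] assms(6)
      by (force simp: x_def)
    show "x s \<le> x (Suc s)" if "1 \<le> s" "s < m" for s
      unfolding x_def by (rule alpha_consistent_ranked_mono[OF assms(1,2,4,5)]) (use that in auto)
    show "\<forall>s\<in>{1..m}. 0 \<le> x s"
      using alpha_consistent_metric(1)[OF assms(1,5) assms(8)] ranked by (simp add: x_def)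
    show "x (Suc k) \<le> \<alpha> * x (Suc (Suc k))" if "Suc k < m"
      using alpha_consistent_separator(2)[OF assms(1,5), of "Suc k"]
        moderate_up_to_strong[OF assms(7)] that by (simp add: x_def)
    show "r \<in> {1..m}" "d (Inr b) (Inr (fst (\<sigma> i) r)) = 0"
      using r alpha_consistent_metric(2)[OF assms(1,5,8,8)] by simp_all
    show "\<forall>s\<in>{1..m}. d (Inr b) (Inr (fst (\<sigma> i) s)) \<le> x r + x s"
      using alpha_consistent_metric(4)[OF assms(1,5,8)] ranked r(2) by (simp add: x_def)
  qed
  finally show ?thesis using r(2) by (simp add: x_def)
qed

section \<open>The veto rule\<close>

definition score :: "real \<Rightarrow> nat \<Rightarrow> 'n set \<Rightarrow> ('n \<Rightarrow> 'a pref) \<Rightarrow> 'a \<Rightarrow> real" where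
  "score \<alpha> m N \<sigma> c =
     (\<Sum>i\<in>N. pos_weight \<alpha> (intensity_rank m (snd (\<sigma> i))) (position m (\<sigma> i) c))"

definition veto_rule :: "real \<Rightarrow> nat \<Rightarrow> 'n set \<Rightarrow> 'a set \<Rightarrow> ('n \<Rightarrow> 'a pref) \<Rightarrow> 'a" where
  "veto_rule \<alpha> m N A \<sigma> = (SOME a. veto_winner N A (\<lambda>i. position m (\<sigma> i)) (score \<alpha> m N \<sigma>) a)"

lemma veto_rule_winner:
  assumes "valid_profile m N A \<sigma>" "0 \<le> \<alpha>" "\<alpha> \<le> 1"
    and "\<forall>i\<in>N. \<exists>k\<in>{1..m-1}. moderate_up_to m (snd (\<sigma> i)) k"
  shows "veto_winner N A (\<lambda>i. position m (\<sigma> i)) (score \<alpha> m N \<sigma>) (veto_rule \<alpha> m N A \<sigma>)"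
proof -
  have fin: "finite N" "N \<noteq> {}" "finite A" using assms(1) by (simp_all add: valid_profile_def)
  have "sum (score \<alpha> m N \<sigma>) A =
      (\<Sum>i\<in>N. \<Sum>c\<in>A. pos_weight \<alpha> (intensity_rank m (snd (\<sigma> i))) (position m (\<sigma> i) c))"
    unfolding score_def by (rule sum.swap)
  also have "\<dots> = (\<Sum>i\<in>N. 1)"
  proof (rule sum.cong[OF refl])
    fix i assume i: "i \<in> N"
    have "intensity_rank m (snd (\<sigma> i)) < m"
      using intensity_rank_moderate(1) assms(4) i by fastforce
    moreover have "bij_betw (fst (\<sigma> i)) {1..m} A" using assms(1) i by (simp add: valid_profile_def)
    ultimately show "(\<Sum>c\<in>A. pos_weight \<alpha> (intensity_rank m (snd (\<sigma> i))) (position m (\<sigma> i) c)) = 1"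
      using sum_pos_weight_position[where h = "\<lambda>_. 1"] sum_pos_weight by simp
  qed
  finally have "sum (score \<alpha> m N \<sigma>) A = real (card N)" by simp
  moreover have "\<forall>c\<in>A. 0 \<le> score \<alpha> m N \<sigma> c"
    unfolding score_def using assms(2,3) by (simp add: sum_nonneg pos_weight_nonneg)
  ultimately obtain a where "veto_winner N A (\<lambda>i. position m (\<sigma> i)) (score \<alpha> m N \<sigma>) a"
    using veto_winner_exists[OF fin] by fastforce
  then show ?thesis unfolding veto_rule_def by (rule someI)
qed

lemma veto_winner_social_cost_le:
  assumes "alpha_consistent \<alpha> m N A \<sigma> d" "valid_profile m N A \<sigma>" "0 \<le> \<alpha>" "\<alpha> \<le> 1"
    and "\<forall>i\<in>N. \<exists>k\<in>{1..m-1}. moderate_up_to m (snd (\<sigma> i)) k"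
    and "veto_winner N A (\<lambda>i. position m (\<sigma> i)) (score \<alpha> m N \<sigma>) a" "b \<in> A"
    and "\<alpha> \<le> \<tau>" "\<forall>i\<in>N. t_ext \<alpha> (intensity_rank m (snd (\<sigma> i))) \<le> \<tau>"
  shows "social_cost N d a \<le> (2 + \<tau>) * social_cost N d b"
proof -
  let ?w = "\<lambda>i c. pos_weight \<alpha> (intensity_rank m (snd (\<sigma> i))) (position m (\<sigma> i) c)"
  have a: "a \<in> A" using assms(6) by (simp add: veto_winner_def)
  have "social_cost N d a \<le> social_cost N d b + (\<Sum>c\<in>A. score \<alpha> m N \<sigma> c * d (Inr b) (Inr c))"
    unfolding social_cost_def
  proof (rule veto_winner_cost_le[OF assms(6)])
    show "d (Inl i) (Inr a) \<le> d (Inl i) (Inr c)"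
      if "i \<in> N" "c \<in> A" "position m (\<sigma> i) a \<le> position m (\<sigma> i) c" for i c
      by (rule alpha_consistent_position_mono[OF assms(1,2,4) that(1) a that(2,3)])
    show "d (Inl i) (Inr c) \<le> d (Inl i) (Inr b) + d (Inr b) (Inr c)" if "i \<in> N" "c \<in> A" for i c
      by (rule alpha_consistent_metric(3)[OF assms(1) that(1) assms(7) that(2)])
  qed
  also have "(\<Sum>c\<in>A. score \<alpha> m N \<sigma> c * d (Inr b) (Inr c)) = (\<Sum>i\<in>N. \<Sum>c\<in>A. ?w i c * d (Inr b) (Inr c))"
    unfolding score_def sum_distrib_right by (rule sum.swap)
  also have "\<dots> \<le> (\<Sum>i\<in>N. (1 + \<tau>) * d (Inl i) (Inr b))"
  proof (rule sum_mono)
    fix i assume i: "i \<in> N"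
    note k = intensity_rank_moderate[OF assms(5)[rule_format, OF i]]
    have "(\<Sum>c\<in>A. ?w i c * d (Inr b) (Inr c))
        \<le> (1 + max \<alpha> (t_ext \<alpha> (intensity_rank m (snd (\<sigma> i))))) * d (Inl i) (Inr b)"
      by (rule alpha_consistent_weighted_dist_le[OF assms(1-4) i k assms(7)])
    also have "\<dots> \<le> (1 + \<tau>) * d (Inl i) (Inr b)"
      using assms(8,9) i alpha_consistent_metric(1)[OF assms(1) i assms(7,7)]
      by (intro mult_right_mono) auto
    finally show "(\<Sum>c\<in>A. ?w i c * d (Inr b) (Inr c)) \<le> (1 + \<tau>) * d (Inl i) (Inr b)" .
  qed
  finally show ?thesis by (simp add: social_cost_def sum_distrib_left sum.distrib algebra_simps)
qed

lemma distortion_le: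
  assumes "finite A" "A \<noteq> {}" "0 \<le> C"
    and "\<And>d b. alpha_consistent \<alpha> m N A \<sigma> d \<Longrightarrow> b \<in> A \<Longrightarrow> social_cost N d a \<le> C * social_cost N d b"
  shows "distortion \<alpha> m N A \<sigma> a \<le> ereal C"
  unfolding distortion_def
proof (rule SUP_least)
  fix d assume "d \<in> {d. alpha_consistent \<alpha> m N A \<sigma> d}"
  then have d: "alpha_consistent \<alpha> m N A \<sigma> d" by simp
  have "(MIN b\<in>A. social_cost N d b) \<in> social_cost N d ` A" using assms(1,2) by simp
  then obtain b where b: "b \<in> A" "(MIN b\<in>A. social_cost N d b) = social_cost N d b" by auto
  have "0 \<le> social_cost N d b"
    unfolding social_cost_def using alpha_consistent_metric(1)[OF d _ b(1) b(1)] by (simp add: sum_nonneg)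
  \<comment> \<open>if the optimum is \<open>0\<close>, the ratio is \<open>0\<close> by the convention \<open>x / 0 = 0\<close>\<close>
  then have "social_cost N d a / social_cost N d b \<le> C"
    using assms(3) assms(4)[OF d b(1)] by (cases "social_cost N d b = 0") (auto simp: pos_divide_le_eq)
  then show "ereal (social_cost N d a / (MIN b\<in>A. social_cost N d b)) \<le> ereal C"
    using b(2) by simp
qed

theorem theorem4:
  fixes m :: nat and \<alpha> :: real
  assumes "m \<ge> 2" and "0 \<le> \<alpha>" and "\<alpha> \<le> 1"
  shows "\<exists>f :: 'n set \<Rightarrow> 'a set \<Rightarrow> ('n \<Rightarrow> 'a pref) \<Rightarrow> 'a.
    \<forall>N A \<sigma>. valid_profile m N A \<sigma> \<and>
      (\<forall>i\<in>N. \<exists>k\<in>{1..m-1}. moderate_up_to m (snd (\<sigma> i)) k) \<longrightarrow>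
      f N A \<sigma> \<in> A \<and>
      distortion \<alpha> m N A \<sigma> (f N A \<sigma>) \<le>
        ereal (2 + max \<alpha> (t_seq \<alpha> (Max ((\<lambda>i. intensity_rank m (snd (\<sigma> i))) ` N))))"
proof (intro exI[of _ "veto_rule \<alpha> m"] allI impI conjI)
  fix N :: "'n set" and A :: "'a set" and \<sigma> :: "'n \<Rightarrow> 'a pref"
  assume "valid_profile m N A \<sigma> \<and> (\<forall>i\<in>N. \<exists>k\<in>{1..m-1}. moderate_up_to m (snd (\<sigma> i)) k)"
  then have profile: "valid_profile m N A \<sigma>"
    and ranks: "\<forall>i\<in>N. \<exists>k\<in>{1..m-1}. moderate_up_to m (snd (\<sigma> i)) k" by simp_all
  have fin: "finite N" "N \<noteq> {}" "finite A" "A \<noteq> {}"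
    using profile assms(1) by (auto simp: valid_profile_def)
  have winner: "veto_winner N A (\<lambda>i. position m (\<sigma> i)) (score \<alpha> m N \<sigma>) (veto_rule \<alpha> m N A \<sigma>)"
    by (rule veto_rule_winner[OF profile assms(2,3) ranks])
  then show "veto_rule \<alpha> m N A \<sigma> \<in> A" by (simp add: veto_winner_def)
  define lmax where "lmax = Max ((\<lambda>i. intensity_rank m (snd (\<sigma> i))) ` N)"
  have "lmax \<in> (\<lambda>i. intensity_rank m (snd (\<sigma> i))) ` N" using fin by (simp add: lmax_def)
  then have "1 \<le> lmax" using intensity_rank_moderate(1) ranks by fastforce
  have "\<forall>i\<in>N. t_ext \<alpha> (intensity_rank m (snd (\<sigma> i))) \<le> t_ext \<alpha> lmax"
    using fin by (auto simp: lmax_def intro: t_ext_mono[OF assms(2,3)])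
  then show "distortion \<alpha> m N A \<sigma> (veto_rule \<alpha> m N A \<sigma>) \<le> ereal (2 + max \<alpha> (t_seq \<alpha> lmax))"
    unfolding t_seq_eq_t_ext[OF assms(2) \<open>1 \<le> lmax\<close>] using fin(3,4) assms(2)
    by (intro distortion_le veto_winner_social_cost_le[OF _ profile assms(2,3) ranks winner]) auto
qed

end
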